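(* Let $R$ be a commutative ring with unit and let $f,g\in R[q]$ be monic polynomials with $f\Rightarrow_R g$. Then the homomorphism $\rho^R_{(fg),(f)}\colon R[q]^{(fg)}\to R[q]^{(f)}$ induced by the identity of $R[q]$ is injective.
   Context: $q$ is an indeterminate. For an element $h\in R[q]$, $R[q]^{(h)}=\varprojlim_j R[q]/(h)^j$ is the $(h)$-adic completion. For monic $f,g\in R[q]$ write $f\Rightarrow_R g$ if there exist an ideal $I\subset R$ with $\bigcap_{j\ge0}I^j=(0)$ and an integer $m\ge0$ such that $f^m\in(g)+I[q]$. *)

theory Defs
  imports "HOL-Computational_Algebra.Polynomial"
begin

definition is_ideal :: "'a::comm_ring_1 set \<Rightarrow> bool" where
  "is_ideal I \<longleftrightarrow> 0 \<in> I \<and> (\<forall>a\<in>I. \<forall>b\<in>I. a + b \<in> I) \<and> (\<forall>a\<in>I. \<forall>r. r * a \<in> I)"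

definition ideal_gen :: "'a::comm_ring_1 set \<Rightarrow> 'a set" where
  "ideal_gen S = \<Inter>{J. is_ideal J \<and> S \<subseteq> J}"

definition ideal_pow :: "'a::comm_ring_1 set \<Rightarrow> nat \<Rightarrow> 'a set" where
  "ideal_pow I j = ideal_gen {prod_list xs | xs. length xs = j \<and> set xs \<subseteq> I}"

definition poly_ext :: "'a::comm_ring_1 set \<Rightarrow> 'a poly set" where
  "poly_ext I = {p. \<forall>i. coeff p i \<in> I}"

definition poly_implies :: "'a::comm_ring_1 poly \<Rightarrow> 'a poly \<Rightarrow> bool" where
  "poly_implies f g \<longleftrightarrow>
     (\<exists>I m. is_ideal I \<and> (\<Inter>j. ideal_pow I j) = {0} \<and>
            (\<exists>a b. b \<in> poly_ext I \<and> f ^ m = g * a + b))"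

definition res_class :: "'a::comm_ring_1 poly \<Rightarrow> nat \<Rightarrow> 'a poly \<Rightarrow> 'a poly set" where
  "res_class h j p = {r. h ^ j dvd (r - p)}"

text \<open>The (h)-adic completion R[q]^(h) = lim_j R[q]/(h)^j, realised as compatible
  families of residue classes (the transition maps send the class of p mod h^(j+1)
  to the class of p mod h^j, i.e. the former is contained in the latter).\<close>
definition adic_completion :: "'a::comm_ring_1 poly \<Rightarrow> (nat \<Rightarrow> 'a poly set) set" where
  "adic_completion h = {c. (\<forall>j. \<exists>p. c j = res_class h j p) \<and> (\<forall>j. c (Suc j) \<subseteq> c j)}"

definition completion_map :: "'a::comm_ring_1 poly \<Rightarrow> (nat \<Rightarrow> 'a poly set) \<Rightarrow> (nat \<Rightarrow> 'a poly set)" where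
  "completion_map h2 c = (\<lambda>j. \<Union>p\<in>c j. res_class h2 j p)"

end

theory Submission
  imports Defs
begin

(* Represent two points of the (fg)-adic completion by compatible sequences P k, Q k and
   put D k = P k - Q k. Equal images in the (f)-adic completion mean f^k | D k, and
   compatibility gives D j = D k mod (fg)^j, so D j is congruent modulo (fg)^j to
   multiples of arbitrarily high powers of f. From f^m = b mod g with b in I[q] one gets
   f^(m j n) = e mod g^j with e in I^n[q]; hence the remainder of D j modulo the monic
   polynomial (fg)^j has all its coefficients in every I^n, and therefore vanishes. *)

lemma is_ideal_zero: "is_ideal I \<Longrightarrow> 0 \<in> I"
  unfolding is_ideal_def by blast

lemma is_ideal_add: "is_ideal I \<Longrightarrow> a \<in> I \<Longrightarrow> b \<in> I \<Longrightarrow> a + b \<in> I"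
  unfolding is_ideal_def by blast

lemma is_ideal_mult_left: "is_ideal I \<Longrightarrow> a \<in> I \<Longrightarrow> r * a \<in> I"
  unfolding is_ideal_def by blast

lemma is_ideal_mult_right: "is_ideal I \<Longrightarrow> a \<in> I \<Longrightarrow> a * r \<in> I"
  by (metis is_ideal_mult_left mult.commute)

lemma is_ideal_uminus: "is_ideal I \<Longrightarrow> a \<in> I \<Longrightarrow> - a \<in> I"
  using is_ideal_mult_left[of I a "-1"] by simp

lemma is_ideal_diff: "is_ideal I \<Longrightarrow> a \<in> I \<Longrightarrow> b \<in> I \<Longrightarrow> a - b \<in> I"
  using is_ideal_add[of I a "- b"] is_ideal_uminus[of I b] by simp

lemma is_ideal_sum: "is_ideal I \<Longrightarrow> (\<And>i. i \<in> A \<Longrightarrow> h i \<in> I) \<Longrightarrow> sum h A \<in> I"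
  by (induction A rule: infinite_finite_induct) (auto simp: is_ideal_zero is_ideal_add)

lemma is_ideal_colon: "is_ideal K \<Longrightarrow> is_ideal {z. \<forall>y\<in>A. z * y \<in> K}"
  unfolding is_ideal_def by (auto simp: distrib_right mult.assoc)

lemma is_ideal_ideal_gen: "is_ideal (ideal_gen S)"
  unfolding is_ideal_def ideal_gen_def by auto

lemma ideal_gen_subset: "S \<subseteq> ideal_gen S"
  unfolding ideal_gen_def by auto

lemma ideal_gen_least: "is_ideal J \<Longrightarrow> S \<subseteq> J \<Longrightarrow> ideal_gen S \<subseteq> J"
  unfolding ideal_gen_def by auto

lemma is_ideal_ideal_pow: "is_ideal (ideal_pow I n)"
  unfolding ideal_pow_def by (rule is_ideal_ideal_gen)

lemma prod_list_mem_ideal_pow: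
  "length xs = n \<Longrightarrow> set xs \<subseteq> I \<Longrightarrow> prod_list xs \<in> ideal_pow I n"
  unfolding ideal_pow_def by (rule subsetD[OF ideal_gen_subset]) blast

lemma one_mem_ideal_pow_0: "1 \<in> ideal_pow I 0"
  using prod_list_mem_ideal_pow[of "[]" 0 I] by simp

lemma ideal_pow_Suc_mult:
  assumes "x \<in> ideal_pow I n" and "y \<in> I"
  shows "x * y \<in> ideal_pow I (Suc n)"
proof -
  let ?J = "{z. \<forall>y\<in>I. z * y \<in> ideal_pow I (Suc n)}"
  have "prod_list xs \<in> ?J" if "length xs = n" and "set xs \<subseteq> I" for xs
    using prod_list_mem_ideal_pow[of "_ # xs" "Suc n" I] that by (auto simp: mult.commute)
  then have "ideal_pow I n \<subseteq> ?J"
    unfolding ideal_pow_def[of I n]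
    by (intro ideal_gen_least[OF is_ideal_colon[OF is_ideal_ideal_pow]]) blast
  then show ?thesis
    using assms by blast
qed

lemma is_ideal_poly_ext: "is_ideal J \<Longrightarrow> is_ideal (poly_ext J)"
  unfolding is_ideal_def poly_ext_def
  by (auto simp: coeff_mult intro!: is_ideal_sum is_ideal_mult_left[of J] simp: is_ideal_def)

lemma poly_ext_mult_ideal_pow:
  assumes "e \<in> poly_ext (ideal_pow I n)" and "c \<in> poly_ext I"
  shows "e * c \<in> poly_ext (ideal_pow I (Suc n))"
  using assms
  by (auto simp: poly_ext_def coeff_mult intro!: is_ideal_sum[OF is_ideal_ideal_pow] ideal_pow_Suc_mult)

lemma coeff_mult_monic_degree_sum:
  fixes p q :: "'a::comm_ring_1 poly"
  assumes "lead_coeff p = 1"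
  shows "coeff (p * q) (degree p + degree q) = lead_coeff q"
  using coeff_mult_degree_sum[of p q] assms by simp

lemma degree_mult_monic:
  fixes p q :: "'a::comm_ring_1 poly"
  assumes "lead_coeff p = 1" and "q \<noteq> 0"
  shows "degree (p * q) = degree p + degree q"
  using coeff_mult_monic_degree_sum[OF assms(1), of q] assms(2)
  by (metis degree_mult_le le_antisym le_degree leading_coeff_0_iff)

lemma lead_coeff_mult_monic:
  fixes p q :: "'a::comm_ring_1 poly"
  assumes "lead_coeff p = 1"
  shows "lead_coeff (p * q) = lead_coeff q"
  using coeff_mult_monic_degree_sum[OF assms] degree_mult_monic[OF assms] by (cases "q = 0") auto

lemma lead_coeff_power_monic:
  fixes p :: "'a::comm_ring_1 poly"
  assumes "lead_coeff p = 1"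
  shows "lead_coeff (p ^ n) = 1"
  by (induction n) (simp_all add: lead_coeff_mult_monic assms)

lemma monic_divmod:
  fixes d h :: "'a::comm_ring_1 poly"
  assumes "lead_coeff h = 1"
  obtains q r where "d = h * q + r" and "r = 0 \<or> degree r < degree h"
proof -
  obtain q r where qr: "pseudo_divmod d h = (q, r)"
    by fastforce
  have "h \<noteq> 0"
    using assms by auto
  from pseudo_divmod[OF this qr] assms show ?thesis
    by (intro that) auto
qed

lemma monic_mult_poly_ext_if_high_coeffs:
  fixes G z :: "'a::comm_ring_1 poly"
  assumes J: "is_ideal J" and G: "lead_coeff G = 1"
    and high: "\<And>i. degree G \<le> i \<Longrightarrow> coeff (G * z) i \<in> J"
  shows "z \<in> poly_ext J"
  using high
proof (induction "degree z" arbitrary: z rule: less_induct)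
  case less
  show ?case
  proof (cases "z = 0")
    case True
    then show ?thesis
      using is_ideal_zero[OF is_ideal_poly_ext[OF J]] by simp
  next
    case False
    define M where "M = monom (lead_coeff z) (degree z)"
    define z' where "z' = z - M"
    have "lead_coeff z \<in> J"
      using less.prems[of "degree G + degree z"] coeff_mult_monic_degree_sum[OF G] by simp
    then have M: "M \<in> poly_ext J"
      using J by (auto simp: M_def poly_ext_def coeff_monom is_ideal_zero)
    have "G * M \<in> poly_ext J"
      using is_ideal_mult_left[OF is_ideal_poly_ext[OF J] M] .
    have "coeff (G * z') i \<in> J" if "degree G \<le> i" for i
    proof -
      have "coeff (G * z') i = coeff (G * z) i - coeff (G * M) i"
        by (simp add: z'_def right_diff_distrib)
      then show ?thesis
        using is_ideal_diff[OF J less.prems[OF that]] \<open>G * M \<in> poly_ext J\<close>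
        by (simp add: poly_ext_def)
    qed
    moreover have "z' = 0 \<or> degree z' < degree z"
    proof -
      have "degree z' \<le> degree z"
        unfolding z'_def M_def using degree_diff_le degree_monom_le by blast
      moreover have "coeff z' (degree z) = 0"
        by (simp add: z'_def M_def)
      ultimately show ?thesis
        by (metis le_neq_implies_less leading_coeff_0_iff)
    qed
    ultimately have "z' \<in> poly_ext J"
      using less.hyps is_ideal_zero[OF is_ideal_poly_ext[OF J]] by blast
    then show ?thesis
      using is_ideal_add[OF is_ideal_poly_ext[OF J] _ M, of z'] by (simp add: z'_def)
  qed
qed

text \<open>This stands in for reduction modulo J, i.e. for working in (R/J)[q], which the
  type-class setting does not offer.\<close>

lemma poly_ext_if_monic_dvd_diff:
  fixes G r x :: "'a::comm_ring_1 poly"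
  assumes J: "is_ideal J" and G: "lead_coeff G = 1"
    and r: "r = 0 \<or> degree r < degree G" and x: "x \<in> poly_ext J" and dvd: "G dvd r - x"
  shows "r \<in> poly_ext J"
proof -
  obtain z where z: "r - x = G * z"
    using dvd by blast
  have "coeff (G * z) i \<in> J" if "degree G \<le> i" for i
  proof -
    have "coeff r i = 0"
      using r that by (auto intro: coeff_eq_0)
    then show ?thesis
      using x J by (simp add: z[symmetric] poly_ext_def is_ideal_uminus)
  qed
  then have "z \<in> poly_ext J"
    by (rule monic_mult_poly_ext_if_high_coeffs[OF J G])
  then have "x + G * z \<in> poly_ext J"
    using J x by (simp add: is_ideal_poly_ext is_ideal_add is_ideal_mult_left)
  then show ?thesis
    using z by (simp add: algebra_simps)
qed

lemma dvd_power_diff_poly_ext_ideal_pow: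
  fixes F G c :: "'a::comm_ring_1 poly"
  assumes I: "is_ideal I" and "G dvd F - c" and c: "c \<in> poly_ext I"
  shows "\<exists>e \<in> poly_ext (ideal_pow I n). G dvd F ^ n - e"
proof (induction n)
  case 0
  have "1 \<in> poly_ext (ideal_pow I 0)"
    using one_mem_ideal_pow_0[of I] is_ideal_zero[OF is_ideal_ideal_pow]
    by (auto simp: poly_ext_def coeff_1)
  then show ?case
    by force
next
  case (Suc n)
  then obtain e where e: "e \<in> poly_ext (ideal_pow I n)" and "G dvd F ^ n - e"
    by blast
  then have "G dvd (F ^ n - e) * F + e * (F - c)"
    using \<open>G dvd F - c\<close> by simp
  moreover have "(F ^ n - e) * F + e * (F - c) = F ^ Suc n - e * c"
    by (simp add: algebra_simps)
  ultimately show ?case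
    using poly_ext_mult_ideal_pow[OF e c] by metis
qed

lemma power_dvd_power_diff_poly_ext:
  fixes F G c :: "'a::comm_ring_1 poly"
  assumes I: "is_ideal I" and "G dvd F - c" and c: "c \<in> poly_ext I"
  shows "\<exists>e \<in> poly_ext I. G ^ n dvd F ^ n - e"
proof (induction n)
  case 0
  then show ?case
    using is_ideal_zero[OF is_ideal_poly_ext[OF I]] by force
next
  case (Suc n)
  then obtain e v where e: "e \<in> poly_ext I" and v: "F ^ n - e = G ^ n * v"
    by blast
  obtain a where a: "F - c = G * a"
    using \<open>G dvd F - c\<close> by blast
  have "F ^ Suc n - (G ^ n * v * c + e * F) = (F ^ n - e) * F - G ^ n * v * c"
    by (simp add: algebra_simps)
  also have "\<dots> = G ^ Suc n * (v * a)"
    using v a by (simp add: algebra_simps)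
  moreover have "G ^ n * v * c + e * F \<in> poly_ext I"
    using I c e by (simp add: is_ideal_poly_ext is_ideal_add is_ideal_mult_left is_ideal_mult_right)
  ultimately show ?case
    by (metis dvd_triv_left)
qed

lemma mult_power_dvd_if_dvd_diff_all_powers:
  fixes f g d :: "'a::comm_ring_1 poly"
  assumes f: "lead_coeff f = 1" and g: "lead_coeff g = 1" and "poly_implies f g"
    and congr: "\<And>N. \<exists>t. (f * g) ^ j dvd d - f ^ N * t"
  shows "(f * g) ^ j dvd d"
proof -
  obtain I m a b where I: "is_ideal I" and Krull: "(\<Inter>n. ideal_pow I n) = {0}"
    and b: "b \<in> poly_ext I" and fm: "f ^ m = g * a + b"
    using \<open>poly_implies f g\<close> unfolding poly_implies_def by blast
  have "g dvd f ^ m - b"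
    using fm by simp
  then obtain c where c: "c \<in> poly_ext I" and fmj: "g ^ j dvd (f ^ m) ^ j - c"
    using power_dvd_power_diff_poly_ext[OF I _ b] by blast
  define H where "H = (f * g) ^ j"
  have "lead_coeff (f * g) = 1"
    using lead_coeff_mult_monic[OF f] g by simp
  then have H_monic: "lead_coeff H = 1"
    unfolding H_def by (rule lead_coeff_power_monic)
  obtain q r where d: "d = H * q + r" and r: "r = 0 \<or> degree r < degree H"
    using monic_divmod[OF H_monic] by blast
  have "r \<in> poly_ext (ideal_pow I n)" for n
  proof -
    define X where "X = ((f ^ m) ^ j) ^ n"
    obtain e where e: "e \<in> poly_ext (ideal_pow I n)" and "g ^ j dvd X - e"
      unfolding X_def using dvd_power_diff_poly_ext_ideal_pow[OF I fmj c] by blast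
    then have "H dvd f ^ j * (X - e)"
      unfolding H_def power_mult_distrib by (simp add: mult_dvd_mono)
    moreover obtain t where "H dvd d - f ^ j * X * t"
      using congr[of "j + m * j * n"] by (auto simp: H_def X_def power_add power_mult)
    ultimately have "H dvd (d - f ^ j * X * t) + f ^ j * (X - e) * t - H * q"
      by (simp add: dvd_mult2)
    also have "\<dots> = r - f ^ j * e * t"
      by (simp add: d algebra_simps)
    finally have "H dvd r - f ^ j * e * t" .
    moreover have "f ^ j * e * t \<in> poly_ext (ideal_pow I n)"
      using is_ideal_poly_ext[OF is_ideal_ideal_pow] e
      by (intro is_ideal_mult_left is_ideal_mult_right)
    ultimately show ?thesis
      by (intro poly_ext_if_monic_dvd_diff[OF is_ideal_ideal_pow H_monic r])
  qed
  then have "r = 0"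
    using Krull by (auto simp: poly_ext_def poly_eq_iff)
  then show ?thesis
    using d by (simp add: H_def)
qed

lemma mult_power_dvd_if_compatible:
  fixes f g :: "'a::comm_ring_1 poly"
  assumes "lead_coeff f = 1" and "lead_coeff g = 1" and "poly_implies f g"
    and f_dvd: "\<And>k. f ^ k dvd D k" and compat: "\<And>j k. j \<le> k \<Longrightarrow> (f * g) ^ j dvd D k - D j"
  shows "(f * g) ^ j dvd D j"
proof (rule mult_power_dvd_if_dvd_diff_all_powers[OF assms(1-3)])
  fix N
  obtain t where t: "D (j + N) = f ^ N * (f ^ j * t)"
    using f_dvd[of "j + N"] by (auto simp: power_add mult.assoc mult.left_commute)
  have "(f * g) ^ j dvd - (D (j + N) - D j)"
    using compat[of j "j + N"] by (simp only: dvd_minus_iff)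
  then have "(f * g) ^ j dvd D j - D (j + N)"
    by (simp only: minus_diff_eq)
  then show "\<exists>t. (f * g) ^ j dvd D j - f ^ N * t"
    by (auto simp: t)
qed

lemma res_class_eq_iff: "res_class h j p = res_class h j p' \<longleftrightarrow> h ^ j dvd p - p'"
proof
  assume "res_class h j p = res_class h j p'"
  moreover have "p \<in> res_class h j p"
    by (simp add: res_class_def)
  ultimately have "p \<in> res_class h j p'"
    by simp
  then show "h ^ j dvd p - p'"
    by (simp add: res_class_def)
next
  assume "h ^ j dvd p - p'"
  moreover have "r - p' = (r - p) + (p - p')" for r
    by simp
  ultimately have "h ^ j dvd r - p \<longleftrightarrow> h ^ j dvd r - p'" for r
    using dvd_add_left_iff by metis
  then show "res_class h j p = res_class h j p'"
    by (simp add: res_class_def)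
qed

lemma UN_res_class_of_dvd:
  assumes "h' dvd h"
  shows "(\<Union>p \<in> res_class h j P. res_class h' j p) = res_class h' j P"
proof -
  have "res_class h' j p = res_class h' j P" if "p \<in> res_class h j P" for p
  proof -
    have "h ^ j dvd p - P"
      using that by (simp add: res_class_def)
    then show ?thesis
      unfolding res_class_eq_iff using assms dvd_power_same dvd_trans by blast
  qed
  moreover have "P \<in> res_class h j P"
    by (simp add: res_class_def)
  ultimately show ?thesis
    by blast
qed

lemma adic_completion_representatives:
  assumes c: "c \<in> adic_completion h"
  obtains P where "\<And>j. c j = res_class h j (P j)" and "\<And>j k. j \<le> k \<Longrightarrow> h ^ j dvd P k - P j"
proof -
  have "\<forall>j. \<exists>p. c j = res_class h j p"
    using c by (simp add: adic_completion_def)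
  then obtain P where P: "\<And>j. c j = res_class h j (P j)"
    by metis
  have "h ^ j dvd P k - P j" if "j \<le> k" for j k
  proof -
    have "c k \<subseteq> c j"
      using lift_Suc_antimono_le[of c] c that by (simp add: adic_completion_def)
    moreover have "P k \<in> c k"
      by (simp add: P res_class_def)
    ultimately have "P k \<in> c j"
      by blast
    then show ?thesis
      by (simp add: P res_class_def)
  qed
  with P show ?thesis
    by (rule that)
qed

theorem proposition3p2:
  fixes f g :: "'a::comm_ring_1 poly"
  assumes "lead_coeff f = 1" and "lead_coeff g = 1"
    and "poly_implies f g"
  shows "inj_on (completion_map f) (adic_completion (f * g))"
proof (rule inj_onI)
  fix c c' assume "c \<in> adic_completion (f * g)" and "c' \<in> adic_completion (f * g)"
    and images: "completion_map f c = completion_map f c'"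
  obtain P where P: "\<And>j. c j = res_class (f * g) j (P j)"
    and P_compat: "\<And>j k. j \<le> k \<Longrightarrow> (f * g) ^ j dvd P k - P j"
    using adic_completion_representatives[OF \<open>c \<in> _\<close>] by blast
  obtain Q where Q: "\<And>j. c' j = res_class (f * g) j (Q j)"
    and Q_compat: "\<And>j k. j \<le> k \<Longrightarrow> (f * g) ^ j dvd Q k - Q j"
    using adic_completion_representatives[OF \<open>c' \<in> _\<close>] by blast
  have "res_class f k (P k) = res_class f k (Q k)" for k
    using fun_cong[OF images, of k]
    by (simp add: completion_map_def P Q UN_res_class_of_dvd[OF dvd_triv_left])
  then have f_dvd: "f ^ k dvd P k - Q k" for k
    by (simp add: res_class_eq_iff)
  have "(f * g) ^ j dvd (P k - Q k) - (P j - Q j)" if "j \<le> k" for j k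
  proof -
    have "(f * g) ^ j dvd (P k - P j) - (Q k - Q j)"
      using that by (intro dvd_diff P_compat Q_compat)
    also have "(P k - P j) - (Q k - Q j) = (P k - Q k) - (P j - Q j)"
      by simp
    finally show ?thesis .
  qed
  then have "(f * g) ^ j dvd P j - Q j" for j
    by (rule mult_power_dvd_if_compatible[OF assms f_dvd])
  then show "c = c'"
    by (simp add: P Q res_class_eq_iff fun_eq_iff)
qed

end
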